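(* Let $X$ be a complex linear space and $A\colon X\to\mathbb{C}$ a nonzero additive functional, and put $\phi(x,y)=-A(x)A(y)$ for $x,y\in X$. Then a function $f\colon X\to\mathbb{C}$ satisfies $f(x+y)=f(x)f(y)-\phi(x,y)$ for all $x,y\in X$ if and only if $f(x)=\gamma A(x)+1$ for all $x\in X$ with $\gamma\in\{i,-i\}$.
   Context: A functional $A\colon X\to\mathbb{C}$ is additive if $A(x+y)=A(x)+A(y)$ for all $x,y\in X$ (it need not be $\mathbb{C}$-linear). *)

theory Defs
  imports Complex_Main
begin

definition additive_functional :: "('a::ab_group_add \<Rightarrow> complex) \<Rightarrow> bool" where
  "additive_functional A \<longleftrightarrow> (\<forall>x y. A (x + y) = A x + A y)"

end

theory Submission
  imports Defs
begin

text \<open>Expanding \<open>f ((x + y) + z) = f (x + (y + z))\<close> with the equation and the additivity of \<open>A\<close>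
  gives \<open>A x A y (f z - 1) = A y A z (f x - 1)\<close>; fixing \<open>x = y = y\<^sub>0\<close> with \<open>A y\<^sub>0 \<noteq> 0\<close> shows that
  \<open>f - 1\<close> is a constant multiple \<open>c A\<close>, and substituting back forces \<open>c\<^sup>2 = -1\<close>.\<close>

lemma complex_square_eq_minus_one_iff: "(c::complex) * c = -1 \<longleftrightarrow> c = \<i> \<or> c = -\<i>"
proof -
  have "c * c + 1 = (c - \<i>) * (c + \<i>)" by (simp add: algebra_simps)
  then show ?thesis by (auto simp: eq_neg_iff_add_eq_0)
qed

lemma product_equation_associativity:
  fixes A f :: "'a::ab_group_add \<Rightarrow> 'b::comm_ring_1"
  assumes add: "\<And>x y. A (x + y) = A x + A y"
    and eq: "\<And>x y. f (x + y) = f x * f y + A x * A y"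
  shows "A x * A y * (f z - 1) = A y * A z * (f x - 1)"
proof -
  have "f ((x + y) + z) = f (x + (y + z))" by (simp add: add.assoc)
  then have "(f x * f y + A x * A y) * f z + (A x + A y) * A z
           = f x * (f y * f z + A y * A z) + A x * (A y + A z)"
    by (simp add: eq add)
  then show ?thesis by (simp add: algebra_simps)
qed

lemma product_equation_affine:
  fixes A f :: "'a::ab_group_add \<Rightarrow> 'b::field"
  assumes add: "\<And>x y. A (x + y) = A x + A y"
    and eq: "\<And>x y. f (x + y) = f x * f y + A x * A y"
    and y0: "A y\<^sub>0 \<noteq> 0"
  obtains c where "c * c = -1" and "\<And>x. f x = c * A x + 1"
proof -
  define c where "c = (f y\<^sub>0 - 1) / A y\<^sub>0"
  have f_affine: "f x = c * A x + 1" for x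
  proof -
    have "A y\<^sub>0 * A y\<^sub>0 * (f x - 1) = A y\<^sub>0 * A x * (f y\<^sub>0 - 1)"
      using product_equation_associativity[OF add eq] .
    then have "A y\<^sub>0 * (f x - 1) = A x * (f y\<^sub>0 - 1)"
      using y0 by (simp add: mult.assoc)
    then show ?thesis using y0 by (simp add: c_def field_simps)
  qed
  have "f (y\<^sub>0 + y\<^sub>0) = f y\<^sub>0 * f y\<^sub>0 + A y\<^sub>0 * A y\<^sub>0" by (rule eq)
  then have "(c * c + 1) * (A y\<^sub>0 * A y\<^sub>0) = 0"
    by (simp add: f_affine add algebra_simps)
  then have "c * c = -1" using y0 by (simp add: eq_neg_iff_add_eq_0)
  with f_affine show thesis using that by blast
qed

lemma affine_solves_product_equation:
  fixes A :: "'a::ab_group_add \<Rightarrow> 'b::comm_ring_1"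
  assumes add: "\<And>x y. A (x + y) = A x + A y"
    and c: "c * c = -1"
  shows "c * A (x + y) + 1 = (c * A x + 1) * (c * A y + 1) + A x * A y"
proof -
  have "(c * A x + 1) * (c * A y + 1) + A x * A y
      = (c * c + 1) * (A x * A y) + c * (A x + A y) + 1"
    by (simp add: algebra_simps)
  also have "\<dots> = c * A (x + y) + 1" by (simp add: c add)
  finally show ?thesis by simp
qed

lemma product_equation_iff:
  fixes A f :: "'a::ab_group_add \<Rightarrow> 'b::field"
  assumes add: "\<And>x y. A (x + y) = A x + A y"
    and nonzero: "A \<noteq> (\<lambda>x. 0)"
  shows "(\<forall>x y. f (x + y) = f x * f y + A x * A y) \<longleftrightarrow>
         (\<exists>c. c * c = -1 \<and> (\<forall>x. f x = c * A x + 1))"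
proof
  assume "\<forall>x y. f (x + y) = f x * f y + A x * A y"
  moreover obtain y\<^sub>0 where "A y\<^sub>0 \<noteq> 0" using nonzero by auto
  ultimately obtain c where "c * c = -1" "\<And>x. f x = c * A x + 1"
    using product_equation_affine[OF add] by metis
  then show "\<exists>c. c * c = -1 \<and> (\<forall>x. f x = c * A x + 1)" by blast
next
  assume "\<exists>c. c * c = -1 \<and> (\<forall>x. f x = c * A x + 1)"
  then show "\<forall>x y. f (x + y) = f x * f y + A x * A y"
    using affine_solves_product_equation[OF add] by auto
qed

theorem mainTheorem9:
  fixes scale :: "complex \<Rightarrow> 'a::ab_group_add \<Rightarrow> 'a"
    and A :: "'a \<Rightarrow> complex"
    and f :: "'a \<Rightarrow> complex"
  assumes "vector_space scale"
    and "additive_functional A"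
    and "A \<noteq> (\<lambda>x. 0)"
  shows "(\<forall>x y. f (x + y) = f x * f y - (- A x * A y)) \<longleftrightarrow>
         (\<exists>\<gamma>\<in>{\<i>, -\<i>}. \<forall>x. f x = \<gamma> * A x + 1)"
proof -
  have add: "\<And>x y. A (x + y) = A x + A y"
    using assms(2) by (simp add: additive_functional_def)
  have "(\<forall>x y. f (x + y) = f x * f y - (- A x * A y)) \<longleftrightarrow>
        (\<exists>c. c * c = -1 \<and> (\<forall>x. f x = c * A x + 1))"
    using product_equation_iff[OF add assms(3)] by simp
  also have "\<dots> \<longleftrightarrow> (\<exists>\<gamma>\<in>{\<i>, -\<i>}. \<forall>x. f x = \<gamma> * A x + 1)"
    by (auto simp: complex_square_eq_minus_one_iff)
  finally show ?thesis .
qed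

end
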